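(* Let $f(n)$ denote the number of Wilf partitions of the positive integer $n$, and let $F(n)$ denote the number of Wilf partitions of $n$ that are fixed points of the involution $\iota$ (defined in the context). Then, as $n \to \infty$, $$\log F(n) \sim \frac12 \log f(n) \sim \frac16 (6n)^{1/3} \log n.$$
   Context: A Wilf partition of a positive integer $n$ is an integer partition of $n$ in which all nonzero multiplicities are distinct. Writing a partition as the set of its part–multiplicity pairs $(p_i,m_i)$ (meaning the part $p_i$ occurs exactly $m_i\ge 1$ times, the $p_i$ being distinct), a Wilf partition has distinct $p_i$ and distinct $m_i$. The involution $\iota$ on Wilf partitions of $n$ interchanges part sizes and multiplicities: it sends the partition with pairs $\{(p_i,m_i)\}$ to the partition with pairs $\{(m_i,p_i)\}$ (which is again a Wilf partition of $n$ since $\sum p_i m_i = n$). A fixed point of $\iota$ is a Wilf partition such that whenever $(p,m)$ is one of its part–multiplicity pairs, so is $(m,p)$. Here $a(n)\sim b(n)$ means $a(n)/b(n)\to 1$. *)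

theory Defs
  imports "HOL-Analysis.Analysis" "HOL-Library.Landau_Symbols"
begin

text \<open>A partition of n is encoded by the finite set of its part-multiplicity pairs (p,m):
  part p occurs exactly m >= 1 times; the parts p are distinct.\<close>

definition wilf_partition :: "nat \<Rightarrow> (nat \<times> nat) set \<Rightarrow> bool" where
  "wilf_partition n P \<longleftrightarrow>
     finite P \<and>
     (\<forall>(p, m) \<in> P. p \<ge> 1 \<and> m \<ge> 1) \<and>
     inj_on fst P \<and> inj_on snd P \<and>
     (\<Sum>(p, m) \<in> P. p * m) = n"

definition wilf_partitions :: "nat \<Rightarrow> (nat \<times> nat) set set" where
  "wilf_partitions n = {P. wilf_partition n P}"

definition iota :: "(nat \<times> nat) set \<Rightarrow> (nat \<times> nat) set" where
  "iota P = (\<lambda>(p, m). (m, p)) ` P"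

definition wilf_count :: "nat \<Rightarrow> nat" where
  "wilf_count n = card (wilf_partitions n)"

definition wilf_fixed_count :: "nat \<Rightarrow> nat" where
  "wilf_fixed_count n = card {P \<in> wilf_partitions n. iota P = P}"

end

theory Submission
  imports Defs "HOL-Combinatorics.Permutations" "HOL-Real_Asymp.Real_Asymp"
begin

text \<open>
  A Wilf partition with \<open>k\<close> pairs \<open>(p, m)\<close> satisfies \<open>k (k + 1) (k + 2) \<le> 6 n\<close>, so
  \<open>k \<le> a = (6 n)\<^bsup>1/3\<^esup>\<close>, and it is a \<open>k\<close>-element subset of \<open>[1..n]\<^sup>2\<close> of weight
  \<open>\<Sum> p m = n\<close>. Rankin's trick bounds the number of such subsets, which gives
  \<open>log f(n) \<le> (1/3 + o(1)) a log n\<close>. A fixed point of \<open>\<iota>\<close> is determined by its diagonal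
  pairs and its pairs above the diagonal, and the latter are at most \<open>a/2\<close> in number, which
  halves the exponent.

  Conversely, take \<open>q\<close> blocks of \<open>b\<close> consecutive parts and match each block, through an
  arbitrary permutation, with a block of \<open>b\<close> consecutive multiplicities, the blocks of
  multiplicities in decreasing order. This yields \<open>(b!)\<^sup>q\<close> Wilf partitions of \<open>n\<close> for
  \<open>b \<approx> a/(q + 4)\<close>, and, mirrored across the diagonal, \<open>(b!)\<^sup>q\<close> fixed points for
  \<open>b \<approx> a/(2q + 6)\<close>. Letting \<open>q \<rightarrow> \<infinity>\<close> gives matching lower bounds.
\<close>

definition weight :: "(nat \<times> nat) set \<Rightarrow> nat" where
  "weight P = (\<Sum>x\<in>P. fst x * snd x)"

lemma wilf_partition_iff:
  "wilf_partition n P \<longleftrightarrow> finite P \<and> (\<forall>x\<in>P. 1 \<le> fst x \<and> 1 \<le> snd x) \<and>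
     inj_on fst P \<and> inj_on snd P \<and> weight P = n"
  by (auto simp: wilf_partition_def weight_def case_prod_beta)

lemma power_div_fact_le_exp:
  fixes x :: real assumes "x \<ge> 0" shows "x ^ k / fact k \<le> exp x"
proof -
  have s: "(\<lambda>n. x ^ n /\<^sub>R fact n) sums exp x" by (rule exp_converges)
  have "sum (\<lambda>n. x ^ n /\<^sub>R fact n) {k} \<le> suminf (\<lambda>n. x ^ n /\<^sub>R fact n)"
    by (rule sum_le_suminf) (use s assms in \<open>auto simp: sums_iff\<close>)
  thus ?thesis using s by (simp add: sums_iff divide_inverse mult.commute)
qed

lemma power_div_fact_le_power_div_mult_exp:
  fixes x a :: real assumes "x \<ge> 0" "a > 0"
  shows "x ^ k / fact k \<le> (x / a) ^ k * exp a"
proof -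
  have "x ^ k / fact k = (x / a) ^ k * (a ^ k / fact k)"
    using assms by (simp add: power_divide)
  also have "\<dots> \<le> (x / a) ^ k * exp a"
    using assms by (intro mult_left_mono power_div_fact_le_exp) auto
  finally show ?thesis .
qed

lemma ln_fact_ge: "real k * ln (real k) - real k \<le> ln (fact k)"
proof (cases "k = 0")
  case False
  have "real k ^ k \<le> exp (real k) * fact k"
    using power_div_fact_le_exp[of "real k" k] by (simp add: field_simps)
  hence "ln (real k ^ k) \<le> ln (exp (real k) * fact k)"
    using False by (intro ln_mono) auto
  thus ?thesis using False by (simp add: ln_realpow ln_mult)
qed simp

lemma sum_inverse_le_one_plus_ln:
  assumes "n \<ge> 1" shows "(\<Sum>p=1..n. 1 / real p) \<le> 1 + ln (real n)"
  using assms
proof (induction n rule: dec_induct)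
  case (step n)
  have "ln (real n / real (Suc n)) \<le> real n / real (Suc n) - 1"
    using step by (intro ln_le_minus_one) auto
  hence "1 / real (Suc n) \<le> ln (real (Suc n)) - ln (real n)"
    using step by (simp add: ln_div field_simps)
  thus ?case using step by (simp add: sum.cl_ivl_Suc)
qed simp

lemma sum_exp_neg_power_le:
  fixes x :: real assumes "x > 0"
  shows "(\<Sum>m=1..n. exp (- x) ^ m) \<le> 1 / x"
proof -
  define r where "r = exp (- x)"
  have r: "0 < r" "r < 1" using assms by (auto simp: r_def)
  have "(1 - r) * (\<Sum>m=1..n. r ^ m) = r - r ^ Suc n"
  proof (induction n)
    case (Suc n)
    have "(1 - r) * (\<Sum>m=1..Suc n. r ^ m) = (1 - r) * (\<Sum>m=1..n. r ^ m) + (1 - r) * r ^ Suc n"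
      by (simp add: sum.cl_ivl_Suc distrib_left)
    also have "\<dots> = r - r ^ Suc (Suc n)" using Suc by (simp add: algebra_simps)
    finally show ?case .
  qed simp
  hence "(1 - r) * (\<Sum>m=1..n. r ^ m) \<le> r" using r by simp
  hence "(\<Sum>m=1..n. r ^ m) \<le> r / (1 - r)"
    using r by (simp add: field_simps)
  also have "r / (1 - r) = 1 / (exp x - 1)"
    by (simp add: r_def exp_minus field_simps)
  also have "\<dots> \<le> 1 / x"
  proof -
    have "x \<le> exp x - 1" using exp_ge_add_one_self[of x] by linarith
    thus ?thesis using assms by (intro divide_left_mono) auto
  qed
  finally show ?thesis by (simp add: r_def)
qed

lemma power_Suc_add_ge:
  fixes S y :: real assumes "S \<ge> 0" "y \<ge> 0"
  shows "S ^ Suc m + real (Suc m) * y * S ^ m \<le> (S + y) ^ Suc m"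
proof (induction m)
  case (Suc m)
  have "S ^ Suc (Suc m) + real (Suc (Suc m)) * y * S ^ Suc m
      \<le> (S + y) * (S ^ Suc m + real (Suc m) * y * S ^ m)"
    using assms by (simp add: algebra_simps)
  also have "\<dots> \<le> (S + y) * (S + y) ^ Suc m"
    using Suc assms by (intro mult_left_mono) auto
  finally show ?case by simp
qed simp

lemma powr_one_third_cube:
  fixes x :: real assumes "x \<ge> 0" shows "(x powr (1/3)) ^ 3 = x"
proof -
  have "(x powr (1/3)) ^ 3 = (x powr (1/3)) powr (real 3)"
    using assms by (cases "x = 0") (simp_all add: powr_realpow)
  also have "\<dots> = x" using assms by (simp add: powr_powr)
  finally show ?thesis .
qed

lemma le_powr_one_third_of_cube_le:
  fixes k m :: nat assumes "k ^ 3 \<le> m" shows "real k \<le> real m powr (1/3)"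
proof -
  have "real k = (real k ^ 3) powr (1/3)"
  proof (cases "k = 0")
    case False
    hence "real k ^ 3 = real k powr (real 3)" by (subst powr_realpow) auto
    hence "(real k ^ 3) powr (1/3) = real k powr (real 3 * (1/3))" by (simp only: powr_powr)
    thus ?thesis using False by simp
  qed simp
  also have "\<dots> \<le> real m powr (1/3)"
    using assms by (intro powr_mono2) (auto simp flip: of_nat_power)
  finally show ?thesis .
qed

section \<open>Counting subsets of bounded weight\<close>

definition elem_sym :: "('a \<Rightarrow> real) \<Rightarrow> 'a set \<Rightarrow> nat \<Rightarrow> real" where
  "elem_sym x U k = (\<Sum>Q\<in>{Q. Q \<subseteq> U \<and> card Q = k}. \<Prod>u\<in>Q. x u)"

lemma elem_sym_0: "finite U \<Longrightarrow> elem_sym x U 0 = 1"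
proof -
  assume U: "finite U"
  have "{Q. Q \<subseteq> U \<and> card Q = 0} = {{}}"
  proof (intro equalityI subsetI)
    fix Q assume "Q \<in> {Q. Q \<subseteq> U \<and> card Q = 0}"
    hence "finite Q" "card Q = 0" using finite_subset U by auto
    thus "Q \<in> {{}}" by simp
  qed simp
  thus ?thesis by (simp add: elem_sym_def)
qed

lemma subsets_card_Suc_insert:
  assumes U: "finite U" and a: "a \<notin> U"
  shows "{Q. Q \<subseteq> insert a U \<and> card Q = Suc j} =
         {Q. Q \<subseteq> U \<and> card Q = Suc j} \<union> insert a ` {Q. Q \<subseteq> U \<and> card Q = j}"
proof (intro equalityI subsetI)
  fix Q assume "Q \<in> {Q. Q \<subseteq> insert a U \<and> card Q = Suc j}"
  hence Q: "Q \<subseteq> insert a U" "card Q = Suc j" by auto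
  have fQ: "finite Q" using Q(1) U finite_subset by blast
  show "Q \<in> {Q. Q \<subseteq> U \<and> card Q = Suc j} \<union> insert a ` {Q. Q \<subseteq> U \<and> card Q = j}"
  proof (cases "a \<in> Q")
    case True
    have "Q = insert a (Q - {a})" using True by auto
    moreover have "Q - {a} \<subseteq> U" "card (Q - {a}) = j" using Q True fQ by auto
    ultimately show ?thesis by blast
  qed (use Q in auto)
next
  fix Q assume "Q \<in> {Q. Q \<subseteq> U \<and> card Q = Suc j} \<union> insert a ` {Q. Q \<subseteq> U \<and> card Q = j}"
  thus "Q \<in> {Q. Q \<subseteq> insert a U \<and> card Q = Suc j}"
  proof
    assume "Q \<in> insert a ` {Q. Q \<subseteq> U \<and> card Q = j}"
    then obtain R where R: "R \<subseteq> U" "card R = j" "Q = insert a R" by auto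
    have "finite R" using R U finite_subset by blast
    moreover have "a \<notin> R" using R a by auto
    ultimately show ?thesis using R a by auto
  qed auto
qed

lemma elem_sym_insert:
  assumes U: "finite U" and a: "a \<notin> U"
  shows "elem_sym x (insert a U) (Suc j) = elem_sym x U (Suc j) + x a * elem_sym x U j"
proof -
  have inj: "inj_on (insert a) {Q. Q \<subseteq> U \<and> card Q = j}"
    using a by (auto simp: inj_on_def)
  have "elem_sym x (insert a U) (Suc j) = elem_sym x U (Suc j) +
          (\<Sum>Q\<in>insert a ` {Q. Q \<subseteq> U \<and> card Q = j}. \<Prod>u\<in>Q. x u)"
    unfolding elem_sym_def subsets_card_Suc_insert[OF U a]
    by (rule sum.union_disjoint) (use U a in auto)
  also have "(\<Sum>Q\<in>insert a ` {Q. Q \<subseteq> U \<and> card Q = j}. \<Prod>u\<in>Q. x u)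
      = (\<Sum>Q\<in>{Q. Q \<subseteq> U \<and> card Q = j}. \<Prod>u\<in>insert a Q. x u)"
    by (rule sum.reindex[OF inj, unfolded comp_def])
  also have "\<dots> = (\<Sum>Q\<in>{Q. Q \<subseteq> U \<and> card Q = j}. x a * (\<Prod>u\<in>Q. x u))"
  proof (rule sum.cong[OF refl])
    fix Q assume "Q \<in> {Q. Q \<subseteq> U \<and> card Q = j}"
    hence "finite Q" "a \<notin> Q" using U a finite_subset by auto
    thus "(\<Prod>u\<in>insert a Q. x u) = x a * (\<Prod>u\<in>Q. x u)" by simp
  qed
  also have "\<dots> = x a * elem_sym x U j" by (simp add: elem_sym_def sum_distrib_left)
  finally show ?thesis .
qed

lemma elem_sym_mult_fact_le:
  assumes "finite U" "\<And>u. u \<in> U \<Longrightarrow> x u \<ge> 0"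
  shows "elem_sym x U k * fact k \<le> (\<Sum>u\<in>U. x u) ^ k"
  using assms
proof (induction U arbitrary: k rule: finite_induct)
  case empty
  show ?case
  proof (cases k)
    case (Suc j)
    hence "{Q. Q \<subseteq> {} \<and> card Q = k} = {}" by auto
    hence "elem_sym x {} k = 0" unfolding elem_sym_def by (metis sum.empty)
    thus ?thesis using Suc by simp
  qed (simp add: elem_sym_0)
next
  case (insert a U)
  show ?case
  proof (cases k)
    case 0 thus ?thesis using insert by (simp add: elem_sym_0)
  next
    case (Suc j)
    let ?S = "\<Sum>u\<in>U. x u"
    have xa: "x a \<ge> 0" and S: "?S \<ge> 0" using insert by (auto intro: sum_nonneg)
    have "elem_sym x (insert a U) k * fact k
        = elem_sym x U (Suc j) * fact (Suc j) + real (Suc j) * x a * (elem_sym x U j * fact j)"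
      using Suc elem_sym_insert[OF insert(1,2)] by (simp add: algebra_simps)
    also have "\<dots> \<le> ?S ^ Suc j + real (Suc j) * x a * ?S ^ j"
      using insert(3)[of "Suc j"] insert(3)[of j] insert(4) xa
      by (intro add_mono mult_left_mono) auto
    also have "\<dots> \<le> (?S + x a) ^ Suc j" by (rule power_Suc_add_ge[OF S xa])
    finally show ?thesis using Suc insert by (simp add: add.commute)
  qed
qed

text \<open>Rankin's trick: every counted set \<open>Q\<close> satisfies \<open>1 \<le> exp (t * (N - w Q))\<close>.\<close>

lemma card_subsets_weight_le_mult_fact:
  fixes w :: "'a \<Rightarrow> real"
  assumes U: "finite U" and t: "t \<ge> 0"
  shows "real (card {Q. Q \<subseteq> U \<and> card Q = k \<and> (\<Sum>u\<in>Q. w u) \<le> N}) * fact k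
         \<le> exp (t * N) * (\<Sum>u\<in>U. exp (- t * w u)) ^ k"
proof -
  let ?F = "{Q. Q \<subseteq> U \<and> card Q = k \<and> (\<Sum>u\<in>Q. w u) \<le> N}"
  have "real (card ?F) = (\<Sum>Q\<in>?F. 1)" by simp
  also have "\<dots> \<le> (\<Sum>Q\<in>?F. exp (t * N) * (\<Prod>u\<in>Q. exp (- t * w u)))"
  proof (rule sum_mono)
    fix Q assume Q: "Q \<in> ?F"
    hence "finite Q" using U finite_subset by auto
    hence "(\<Prod>u\<in>Q. exp (- t * w u)) = exp (- t * (\<Sum>u\<in>Q. w u))"
      by (simp add: exp_sum sum_distrib_left)
    hence "exp (t * N) * (\<Prod>u\<in>Q. exp (- t * w u)) = exp (t * (N - (\<Sum>u\<in>Q. w u)))"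
      by (simp add: mult_exp_exp algebra_simps)
    moreover have "t * (N - (\<Sum>u\<in>Q. w u)) \<ge> 0" using Q t by auto
    ultimately show "1 \<le> exp (t * N) * (\<Prod>u\<in>Q. exp (- t * w u))" by simp
  qed
  also have "\<dots> \<le> (\<Sum>Q\<in>{Q. Q \<subseteq> U \<and> card Q = k}. exp (t * N) * (\<Prod>u\<in>Q. exp (- t * w u)))"
    by (rule sum_mono2) (use U in \<open>auto intro!: prod_nonneg mult_nonneg_nonneg\<close>)
  also have "\<dots> = exp (t * N) * elem_sym (\<lambda>u. exp (- t * w u)) U k"
    by (simp add: elem_sym_def sum_distrib_left)
  finally have "real (card ?F) * fact k
      \<le> exp (t * N) * (elem_sym (\<lambda>u. exp (- t * w u)) U k * fact k)"
    by (simp add: mult_right_mono)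
  also have "\<dots> \<le> exp (t * N) * (\<Sum>u\<in>U. exp (- t * w u)) ^ k"
    by (intro mult_left_mono elem_sym_mult_fact_le U) auto
  finally show ?thesis .
qed

lemma card_subsets_card_mult_fact_le:
  assumes "finite U"
  shows "real (card {Q. Q \<subseteq> U \<and> card Q = k}) * fact k \<le> real (card U) ^ k"
  using card_subsets_weight_le_mult_fact[OF assms order_refl, of k "\<lambda>_. 0" 0] by simp

definition small_weight_sets :: "nat \<Rightarrow> nat \<Rightarrow> (nat \<times> nat) set set" where
  "small_weight_sets n k = {Q. Q \<subseteq> {1..n} \<times> {1..n} \<and> card Q = k \<and> weight Q \<le> n}"

lemma finite_small_weight_sets: "finite (small_weight_sets n k)"
  unfolding small_weight_sets_def
  by (rule finite_subset[of _ "Pow ({1..n} \<times> {1..n})"]) auto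

lemma sum_exp_neg_weight_le:
  assumes n: "n \<ge> 1" and t: "t > 0"
  shows "(\<Sum>u\<in>{1..n} \<times> {1..n}. exp (- t * real (fst u * snd u))) \<le> (1 + ln (real n)) / t"
proof -
  have "(\<Sum>u\<in>{1..n} \<times> {1..n}. exp (- t * real (fst u * snd u)))
      = (\<Sum>p=1..n. \<Sum>m=1..n. exp (- (t * real p)) ^ m)"
  proof -
    have "(\<Sum>p=1..n. \<Sum>m=1..n. exp (- (t * real p)) ^ m)
        = (\<Sum>p=1..n. \<Sum>m=1..n. exp (- t * real (p * m)))"
      by (intro sum.cong refl) (simp add: exp_of_nat_mult[symmetric] algebra_simps)
    thus ?thesis by (simp add: sum.cartesian_product case_prod_beta)
  qed
  also have "\<dots> \<le> (\<Sum>p=1..n. 1 / (t * real p))"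
    using t by (intro sum_mono sum_exp_neg_power_le) auto
  also have "\<dots> = (1 / t) * (\<Sum>p=1..n. 1 / real p)" by (simp add: sum_distrib_left)
  also have "\<dots> \<le> (1 / t) * (1 + ln (real n))"
    using t n by (intro mult_left_mono sum_inverse_le_one_plus_ln) auto
  finally show ?thesis by simp
qed

lemma card_small_weight_sets_le:
  assumes n: "n \<ge> 1" and a: "a > 0"
  shows "real (card (small_weight_sets n k))
           \<le> exp (2 * a) * (real n * (1 + ln (real n)) / a\<^sup>2) ^ k"
proof -
  define t where "t = a / real n"
  define X where "X = real n * (1 + ln (real n)) / a"
  have t: "t > 0" and tn: "t * real n = a" using n a by (auto simp: t_def)
  have X: "X \<ge> 0" using n a by (simp add: X_def)
  have "(\<Sum>u\<in>Q. real (fst u * snd u)) = real (weight Q)" for Q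
    by (simp add: weight_def)
  hence "small_weight_sets n k = {Q. Q \<subseteq> {1..n} \<times> {1..n} \<and> card Q = k
                                 \<and> (\<Sum>u\<in>Q. real (fst u * snd u)) \<le> real n}"
    by (simp add: small_weight_sets_def)
  hence "real (card (small_weight_sets n k)) * fact k
      \<le> exp (t * real n) * (\<Sum>u\<in>{1..n} \<times> {1..n}. exp (- t * real (fst u * snd u))) ^ k"
    using card_subsets_weight_le_mult_fact[of "{1..n} \<times> {1..n}" t k] t by simp
  also have "\<dots> \<le> exp a * X ^ k"
  proof -
    have "(1 + ln (real n)) / t = X" using n a by (simp add: X_def t_def)
    hence "(\<Sum>u\<in>{1..n} \<times> {1..n}. exp (- t * real (fst u * snd u))) \<le> X"
      using sum_exp_neg_weight_le[OF n t] by simp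
    thus ?thesis unfolding tn by (intro mult_left_mono power_mono) (auto intro: sum_nonneg)
  qed
  finally have "real (card (small_weight_sets n k)) \<le> exp a * (X ^ k / fact k)"
    by (simp add: field_simps)
  also have "\<dots> \<le> exp a * ((X / a) ^ k * exp a)"
    using X a by (intro mult_left_mono power_div_fact_le_power_div_mult_exp) auto
  also have "\<dots> = exp (2 * a) * (real n * (1 + ln (real n)) / a\<^sup>2) ^ k"
    by (simp add: X_def power2_eq_square mult_exp_exp)
  finally show ?thesis .
qed

section \<open>Few parts and multiplicities\<close>

lemma double_sum_tetrahedral: "6 * (\<Sum>a<k. \<Sum>b<k. k - a - b) = k * (k + 1) * (k + 2 :: nat)"
proof -
  have row: "2 * (\<Sum>b<k. c - b) = c * (c + 1)" if "c \<le> k" for c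
    using that
  proof (induction c)
    case (Suc c)
    have "(\<Sum>b<k. Suc c - b) = (\<Sum>b<k. (c - b) + (if b \<le> c then 1 else 0))"
      by (rule sum.cong) auto
    also have "\<dots> = (\<Sum>b<k. c - b) + card {b. b < k \<and> b \<le> c}"
      by (simp add: sum.distrib sum.If_cases Int_def)
    also have "{b. b < k \<and> b \<le> c} = {..c}" using Suc by auto
    finally show ?case using Suc by simp
  qed simp
  have col: "3 * (\<Sum>a<k. (k - a) * (k - a + 1)) = k * (k + 1) * (k + 2)" for k :: nat
  proof (induction k)
    case (Suc k)
    have "(\<Sum>a<Suc k. (Suc k - a) * (Suc k - a + 1))
        = Suc k * (Suc k + 1) + (\<Sum>a<k. (k - a) * (k - a + 1))"
      by (subst sum.lessThan_Suc_shift) simp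
    thus ?case using Suc by (simp add: algebra_simps)
  qed simp
  have "2 * (\<Sum>a<k. \<Sum>b<k. k - a - b) = (\<Sum>a<k. 2 * (\<Sum>b<k. (k - a) - b))"
    by (simp add: sum_distrib_left)
  also have "\<dots> = (\<Sum>a<k. (k - a) * (k - a + 1))"
    by (rule sum.cong[OF refl], rule row) auto
  finally show ?thesis using col[of k] by linarith
qed

lemma card_filter_less_le:
  assumes "inj_on f A" "\<forall>x\<in>A. f x \<ge> (1::nat)"
  shows "card {x\<in>A. f x < a} \<le> a - 1"
proof -
  have "card {x\<in>A. f x < a} = card (f ` {x\<in>A. f x < a})"
    using assms by (intro card_image[symmetric]) (auto intro: inj_on_subset)
  also have "\<dots> \<le> card {1..<a}" by (rule card_mono) (use assms in auto)
  finally show ?thesis by simp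
qed

lemma card_pairs_beyond_ge:
  fixes P :: "(nat \<times> nat) set"
  assumes fin: "finite P" and i1: "inj_on fst P" and i2: "inj_on snd P"
    and pos: "\<forall>x\<in>P. fst x \<ge> 1 \<and> snd x \<ge> 1"
  shows "card P - a - b \<le> card {x\<in>P. a < fst x \<and> b < snd x}"
proof -
  have "card P \<le> card ({x\<in>P. a < fst x \<and> b < snd x} \<union> {x\<in>P. fst x < Suc a}
                        \<union> {x\<in>P. snd x < Suc b})"
    by (intro card_mono) (use fin in auto)
  also have "\<dots> \<le> card {x\<in>P. a < fst x \<and> b < snd x} + card {x\<in>P. fst x < Suc a}
                  + card {x\<in>P. snd x < Suc b}"
    by (meson card_Un_le le_trans add_right_mono)
  moreover have "card {x\<in>P. fst x < Suc a} \<le> a"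
    using card_filter_less_le[OF i1, of "Suc a"] pos by auto
  moreover have "card {x\<in>P. snd x < Suc b} \<le> b"
    using card_filter_less_le[OF i2, of "Suc b"] pos by auto
  ultimately show ?thesis by linarith
qed

text \<open>Count the triples \<open>(x, a, b)\<close> with \<open>x \<in> P\<close> and \<open>a < fst x\<close>, \<open>b < snd x\<close>,
  \<open>a, b < card P\<close>: a pair \<open>x\<close> occurs in at most \<open>fst x * snd x\<close> of them.\<close>

lemma card_tetrahedral_le_six_weight:
  fixes P :: "(nat \<times> nat) set"
  assumes fin: "finite P" and i1: "inj_on fst P" and i2: "inj_on snd P"
    and pos: "\<forall>x\<in>P. fst x \<ge> 1 \<and> snd x \<ge> 1"
  shows "card P * (card P + 1) * (card P + 2) \<le> 6 * weight P"
proof -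
  define k where "k = card P"
  let ?I = "\<lambda>x a b. (if a < fst x \<and> b < snd x then 1 else 0) :: nat"
  have per_pair: "(\<Sum>a<k. \<Sum>b<k. ?I x a b) \<le> fst x * snd x" for x
  proof -
    have "(\<Sum>a<k. \<Sum>b<k. ?I x a b)
        = (\<Sum>a<k. (if a < fst x then 1 else 0) * (\<Sum>b<k. (if b < snd x then 1 else 0)))"
      by (intro sum.cong refl) (auto simp: sum_distrib_left)
    also have "\<dots> = card {a. a < k \<and> a < fst x} * card {b. b < k \<and> b < snd x}"
      by (simp add: sum_distrib_right[symmetric] sum.If_cases Int_def)
    also have "\<dots> \<le> fst x * snd x"
    proof (intro mult_mono)
      show "card {a. a < k \<and> a < fst x} \<le> fst x"
        using card_mono[of "{..<fst x}" "{a. a < k \<and> a < fst x}"] by auto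
      show "card {b. b < k \<and> b < snd x} \<le> snd x"
        using card_mono[of "{..<snd x}" "{b. b < k \<and> b < snd x}"] by auto
    qed auto
    finally show ?thesis .
  qed
  have per_cell: "k - a - b \<le> (\<Sum>x\<in>P. ?I x a b)" for a b
    using card_pairs_beyond_ge[OF assms, of a b]
      sum.inter_filter[OF fin, of "\<lambda>_. 1::nat" "\<lambda>x. a < fst x \<and> b < snd x"]
    by (simp add: k_def)
  have "k * (k + 1) * (k + 2) = 6 * (\<Sum>a<k. \<Sum>b<k. k - a - b)"
    by (rule double_sum_tetrahedral[symmetric])
  also have "\<dots> \<le> 6 * (\<Sum>a<k. \<Sum>b<k. \<Sum>x\<in>P. ?I x a b)"
    using per_cell by (intro mult_left_mono sum_mono) auto
  also have "(\<Sum>a<k. \<Sum>b<k. \<Sum>x\<in>P. ?I x a b) = (\<Sum>x\<in>P. \<Sum>a<k. \<Sum>b<k. ?I x a b)"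
    by (subst sum.swap) (simp add: sum.swap[of _ P])
  also have "\<dots> \<le> weight P" unfolding weight_def by (intro sum_mono per_pair)
  finally show ?thesis unfolding k_def by simp
qed

lemma wilf_partition_card_cube_le:
  assumes "wilf_partition n P" shows "card P ^ 3 \<le> 6 * n"
proof -
  have "card P * card P * card P \<le> card P * (card P + 1) * (card P + 2)"
    by (intro mult_mono) auto
  hence "card P ^ 3 \<le> card P * (card P + 1) * (card P + 2)" by (simp add: power3_eq_cube)
  also have "\<dots> \<le> 6 * n"
    using assms card_tetrahedral_le_six_weight by (auto simp: wilf_partition_iff)
  finally show ?thesis .
qed

lemma wilf_partition_subset_grid:
  assumes "wilf_partition n P" shows "P \<subseteq> {1..n} \<times> {1..n}"
proof
  fix x assume x: "x \<in> P"
  have pos: "1 \<le> fst x" "1 \<le> snd x" and fin: "finite P" and w: "weight P = n"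
    using assms x by (auto simp: wilf_partition_iff)
  have "fst x * snd x \<le> n"
    using member_le_sum[OF x _ fin, of "\<lambda>x. fst x * snd x"] w by (simp add: weight_def)
  moreover have "fst x \<le> fst x * snd x" "snd x \<le> fst x * snd x" using pos by auto
  ultimately have "fst x \<le> n" "snd x \<le> n" by linarith+
  thus "x \<in> {1..n} \<times> {1..n}" using pos by (auto simp: mem_Times_iff)
qed

lemma finite_wilf_partitions: "finite (wilf_partitions n)"
proof (rule finite_subset)
  show "wilf_partitions n \<subseteq> Pow ({1..n} \<times> {1..n})"
    unfolding wilf_partitions_def using wilf_partition_subset_grid by blast
qed simp


section \<open>Upper bounds\<close>

lemma card_wilf_partition_le:
  assumes "wilf_partition n P" shows "real (card P) \<le> (6 * real n) powr (1/3)"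
  using le_powr_one_third_of_cube_le[OF wilf_partition_card_cube_le[OF assms]] by simp

lemma wilf_partition_in_small_weight_sets:
  assumes "wilf_partition n P" shows "P \<in> small_weight_sets n (card P)"
  using assms wilf_partition_subset_grid[OF assms]
  by (simp add: small_weight_sets_def wilf_partition_iff)

lemma power_le_powr_of_le:
  fixes B a :: real assumes "1 \<le> B" "real k \<le> a" shows "B ^ k \<le> B powr a"
proof -
  have "B ^ k = B powr real k" using assms by (simp add: powr_realpow)
  also have "\<dots> \<le> B powr a" using assms by (intro powr_mono) auto
  finally show ?thesis .
qed

lemma wilf_count_le:
  assumes n: "n \<ge> 1" and a: "a = (6 * real n) powr (1/3)"
    and B: "1 \<le> real n * (1 + ln (real n)) / a\<^sup>2"
  shows "real (wilf_count n)
           \<le> (a + 1) * (exp (2 * a) * (real n * (1 + ln (real n)) / a\<^sup>2) powr a)"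
proof -
  define M where "M = exp (2 * a) * (real n * (1 + ln (real n)) / a\<^sup>2) powr a"
  define K where "K = nat \<lfloor>a\<rfloor>"
  have apos: "a > 0" using n a by simp
  have KA: "real K \<le> a" unfolding K_def using apos by (simp add: of_nat_nat)
  have "wilf_partitions n \<subseteq> (\<Union>k\<in>{..K}. small_weight_sets n k)"
  proof
    fix P assume "P \<in> wilf_partitions n"
    hence W: "wilf_partition n P" by (simp add: wilf_partitions_def)
    have "card P \<le> K" unfolding K_def using card_wilf_partition_le[OF W] a by (simp add: le_nat_floor)
    thus "P \<in> (\<Union>k\<in>{..K}. small_weight_sets n k)"
      using wilf_partition_in_small_weight_sets[OF W] by auto
  qed
  hence "wilf_count n \<le> card (\<Union>k\<in>{..K}. small_weight_sets n k)"
    unfolding wilf_count_def by (intro card_mono) (auto simp: finite_small_weight_sets)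
  also have "\<dots> \<le> (\<Sum>k\<in>{..K}. card (small_weight_sets n k))" by (intro card_UN_le) auto
  finally have "real (wilf_count n) \<le> (\<Sum>k\<in>{..K}. real (card (small_weight_sets n k)))"
    by (simp flip: of_nat_sum)
  also have "\<dots> \<le> (\<Sum>k\<in>{..K}. M)"
  proof (rule sum_mono)
    fix k assume "k \<in> {..K}"
    hence "real k \<le> a" using KA by simp
    hence "(real n * (1 + ln (real n)) / a\<^sup>2) ^ k \<le> (real n * (1 + ln (real n)) / a\<^sup>2) powr a"
      using B by (intro power_le_powr_of_le)
    hence "exp (2 * a) * (real n * (1 + ln (real n)) / a\<^sup>2) ^ k \<le> M"
      unfolding M_def by (intro mult_left_mono) auto
    thus "real (card (small_weight_sets n k)) \<le> M"
      using card_small_weight_sets_le[OF n apos, of k] by linarith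
  qed
  also have "\<dots> \<le> (a + 1) * M"
    using KA by (simp add: M_def mult_right_mono)
  finally show ?thesis by (simp add: M_def)
qed

lemma iota_eq_image_swap: "iota P = prod.swap ` P"
  by (simp add: iota_def prod.swap_def case_prod_beta')

lemma weight_image_swap: "weight (prod.swap ` P) = weight P"
  by (simp add: weight_def sum.reindex mult.commute)

definition diag_part :: "(nat \<times> nat) set \<Rightarrow> (nat \<times> nat) set" where
  "diag_part P = {x\<in>P. fst x = snd x}"

definition upper_part :: "(nat \<times> nat) set \<Rightarrow> (nat \<times> nat) set" where
  "upper_part P = {x\<in>P. fst x < snd x}"

definition diagonal :: "nat \<Rightarrow> (nat \<times> nat) set" where
  "diagonal n = (\<lambda>p. (p, p)) ` {p. 1 \<le> p \<and> p * p \<le> n}"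

lemma iota_fixed_decomp:
  assumes "iota P = P"
  shows "P = diag_part P \<union> upper_part P \<union> prod.swap ` upper_part P"
proof -
  have eq: "prod.swap ` P = P" using assms by (simp add: iota_eq_image_swap)
  have sw: "prod.swap x \<in> P" if "x \<in> P" for x
    using imageI[OF that, of prod.swap] eq by simp
  show ?thesis
  proof (intro equalityI subsetI)
    fix x assume x: "x \<in> P"
    consider "fst x = snd x" | "fst x < snd x" | "snd x < fst x" by linarith
    thus "x \<in> diag_part P \<union> upper_part P \<union> prod.swap ` upper_part P"
    proof cases
      case 3
      hence "prod.swap x \<in> upper_part P" using sw[OF x] by (simp add: upper_part_def)
      hence "prod.swap (prod.swap x) \<in> prod.swap ` upper_part P" by (rule imageI)
      thus ?thesis by simp
    qed (use x in \<open>simp_all add: diag_part_def upper_part_def\<close>)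
  next
    fix x assume "x \<in> diag_part P \<union> upper_part P \<union> prod.swap ` upper_part P"
    thus "x \<in> P" using sw by (auto simp: diag_part_def upper_part_def)
  qed
qed

lemma fixed_wilf_partition_parts:
  assumes W: "wilf_partition n P" and fx: "iota P = P"
  shows "card P = card (diag_part P) + 2 * card (upper_part P)"
    and "upper_part P \<in> small_weight_sets n (card (upper_part P))"
    and "diag_part P \<subseteq> diagonal n"
proof -
  have fin: "finite P" and pos: "\<forall>x\<in>P. 1 \<le> fst x \<and> 1 \<le> snd x" and w: "weight P = n"
    using W by (auto simp: wilf_partition_iff)
  have fin_parts: "finite (diag_part P)" "finite (upper_part P)"
    using fin by (auto simp: diag_part_def upper_part_def)
  have disj: "diag_part P \<inter> upper_part P = {}"
    "(diag_part P \<union> upper_part P) \<inter> prod.swap ` upper_part P = {}"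
    by (auto simp: diag_part_def upper_part_def)
  note dec = iota_fixed_decomp[OF fx]
  have "card P = card (diag_part P \<union> upper_part P) + card (prod.swap ` upper_part P)"
    by (subst dec, rule card_Un_disjoint) (use fin_parts disj in auto)
  also have "card (diag_part P \<union> upper_part P) = card (diag_part P) + card (upper_part P)"
    by (rule card_Un_disjoint) (use fin_parts disj in auto)
  also have "card (prod.swap ` upper_part P) = card (upper_part P)"
    by (rule card_image) simp
  finally show "card P = card (diag_part P) + 2 * card (upper_part P)" by simp
  have "weight P = weight (diag_part P \<union> upper_part P) + weight (prod.swap ` upper_part P)"
    unfolding weight_def by (subst dec, rule sum.union_disjoint) (use fin_parts disj in auto)
  also have "weight (diag_part P \<union> upper_part P) = weight (diag_part P) + weight (upper_part P)"
    unfolding weight_def by (rule sum.union_disjoint) (use fin_parts disj in auto)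
  finally have "weight P = weight (diag_part P) + 2 * weight (upper_part P)"
    by (simp add: weight_image_swap)
  hence wd: "weight (diag_part P) \<le> n" and wu: "weight (upper_part P) \<le> n" using w by auto
  show "upper_part P \<in> small_weight_sets n (card (upper_part P))"
    using wilf_partition_subset_grid[OF W] wu by (auto simp: small_weight_sets_def upper_part_def)
  show "diag_part P \<subseteq> diagonal n"
  proof
    fix x assume x: "x \<in> diag_part P"
    have "fst x * snd x \<le> weight (diag_part P)"
      unfolding weight_def by (rule member_le_sum[OF x _ fin_parts(1)]) auto
    hence "fst x * fst x \<le> n" using wd x by (simp add: diag_part_def)
    moreover have "x = (fst x, fst x)" "1 \<le> fst x" using x pos by (auto simp: diag_part_def prod_eq_iff)
    ultimately show "x \<in> diagonal n" unfolding diagonal_def by (metis (mono_tags) imageI mem_Collect_eq)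
  qed
qed

lemma finite_diagonal: "finite (diagonal n)"
proof -
  have "{p. 1 \<le> p \<and> p * p \<le> n} \<subseteq> {..n}" by auto (metis le_trans le_square)
  thus ?thesis unfolding diagonal_def by (intro finite_imageI) (rule finite_subset, auto)
qed

lemma card_diagonal_le: "real (card (diagonal n)) \<le> sqrt (real n)"
proof -
  have sub: "{p. 1 \<le> p \<and> p * p \<le> n} \<subseteq> {1..nat \<lfloor>sqrt (real n)\<rfloor>}"
  proof
    fix p assume p: "p \<in> {p. 1 \<le> p \<and> p * p \<le> n}"
    hence "real p * real p \<le> real n" by (metis mem_Collect_eq of_nat_le_iff of_nat_mult)
    hence "real p \<le> sqrt (real n)" by (intro real_le_rsqrt) (simp add: power2_eq_square)
    thus "p \<in> {1..nat \<lfloor>sqrt (real n)\<rfloor>}" using p by (auto simp: le_nat_floor)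
  qed
  have "card (diagonal n) \<le> card {p. 1 \<le> p \<and> p * p \<le> n}"
    unfolding diagonal_def by (rule card_image_le) (use sub in \<open>auto intro: finite_subset\<close>)
  also have "\<dots> \<le> card {1..nat \<lfloor>sqrt (real n)\<rfloor>}" by (rule card_mono[OF _ sub]) simp
  finally have "card (diagonal n) \<le> nat \<lfloor>sqrt (real n)\<rfloor>" by simp
  hence "real (card (diagonal n)) \<le> real (nat \<lfloor>sqrt (real n)\<rfloor>)" by (rule of_nat_mono)
  also have "\<dots> \<le> sqrt (real n)" by (simp add: of_nat_nat)
  finally show ?thesis .
qed

lemma card_diagonal_subsets_le:
  assumes a: "a > 0"
  shows "real (card {Q. Q \<subseteq> diagonal n \<and> card Q = d}) \<le> (sqrt (real n) / a) ^ d * exp a"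
proof -
  have "real (card {Q. Q \<subseteq> diagonal n \<and> card Q = d}) * fact d \<le> sqrt (real n) ^ d"
    using card_subsets_card_mult_fact_le[OF finite_diagonal, of n d]
      power_mono[OF card_diagonal_le[of n], of d] by simp
  hence "real (card {Q. Q \<subseteq> diagonal n \<and> card Q = d}) \<le> sqrt (real n) ^ d / fact d"
    by (simp add: field_simps)
  also have "\<dots> \<le> (sqrt (real n) / a) ^ d * exp a"
    using a by (intro power_div_fact_le_power_div_mult_exp) auto
  finally show ?thesis .
qed

text \<open>A fixed point is determined by its diagonal and upper parts, of sizes \<open>d\<close> and \<open>c\<close>
  with \<open>d + 2 * c \<le> K\<close>.\<close>

lemma wilf_fixed_count_le_sum:
  assumes K: "\<And>P. wilf_partition n P \<Longrightarrow> card P \<le> K"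
  shows "wilf_fixed_count n \<le> (\<Sum>i\<in>{i \<in> {..K} \<times> {..K}. fst i + 2 * snd i \<le> K}.
           card {Q. Q \<subseteq> diagonal n \<and> card Q = fst i} * card (small_weight_sets n (snd i)))"
proof -
  define I where "I = {i \<in> {..K} \<times> {..K}. fst i + 2 * snd i \<le> K}"
  define FX where "FX = {P \<in> wilf_partitions n. iota P = P}"
  define D where "D d = {Q. Q \<subseteq> diagonal n \<and> card Q = d}" for d
  define \<phi> where "\<phi> P = (diag_part P, upper_part P)" for P
  have inj: "inj_on \<phi> FX"
  proof (rule inj_onI)
    fix P Q assume "P \<in> FX" "Q \<in> FX" "\<phi> P = \<phi> Q"
    thus "P = Q" using iota_fixed_decomp by (metis (mono_tags, lifting) FX_def \<phi>_def mem_Collect_eq prod.inject)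
  qed
  have "\<phi> ` FX \<subseteq> (\<Union>i\<in>I. D (fst i) \<times> small_weight_sets n (snd i))"
  proof
    fix y assume "y \<in> \<phi> ` FX"
    then obtain P where P: "P \<in> FX" and y: "y = \<phi> P" by auto
    have W: "wilf_partition n P" and fx: "iota P = P"
      using P by (auto simp: FX_def wilf_partitions_def)
    note parts = fixed_wilf_partition_parts[OF W fx]
    have "(card (diag_part P), card (upper_part P)) \<in> I"
      using K[OF W] parts(1) by (auto simp: I_def)
    moreover have "diag_part P \<in> D (card (diag_part P))" using parts(3) by (simp add: D_def)
    ultimately show "y \<in> (\<Union>i\<in>I. D (fst i) \<times> small_weight_sets n (snd i))"
      using parts(2) y by (force simp: \<phi>_def)
  qed
  moreover have "finite I" "finite (D d)" for d
    using finite_diagonal by (auto simp: I_def D_def)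
  ultimately have "card (\<phi> ` FX) \<le> card (\<Union>i\<in>I. D (fst i) \<times> small_weight_sets n (snd i))"
    by (intro card_mono) (auto simp: finite_small_weight_sets)
  also have "\<dots> \<le> (\<Sum>i\<in>I. card (D (fst i) \<times> small_weight_sets n (snd i)))"
    by (rule card_UN_le) (simp add: I_def)
  finally show ?thesis
    using card_image[OF inj] by (simp add: wilf_fixed_count_def I_def D_def FX_def card_cartesian_product)
qed

lemma power_mult_power_le_powr:
  fixes \<beta> \<gamma> a :: real
  assumes "\<beta> \<ge> 0" "\<beta> \<le> sqrt \<gamma>" "\<gamma> \<ge> 1" "real (d + 2 * c) \<le> a"
  shows "\<beta> ^ d * \<gamma> ^ c \<le> \<gamma> powr (a / 2)"
proof -
  have "\<beta> ^ d * \<gamma> ^ c \<le> sqrt \<gamma> ^ d * sqrt \<gamma> ^ (2 * c)"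
    using assms by (simp add: power_mult mult_right_mono power_mono)
  also have "\<dots> = sqrt \<gamma> ^ (d + 2 * c)" by (simp add: power_add)
  also have "\<dots> \<le> sqrt \<gamma> powr a" using assms by (intro power_le_powr_of_le) auto
  also have "\<dots> = \<gamma> powr (a / 2)" using assms by (simp add: powr_half_sqrt[symmetric] powr_powr)
  finally show ?thesis .
qed

lemma card_diagonal_subsets_mult_card_small_weight_sets_le:
  assumes n: "n \<ge> 1" and a: "a > 0" and g: "1 \<le> 4 * real n * (1 + ln (real n)) / a\<^sup>2"
    and dc: "real (d + 2 * c) \<le> a"
  shows "real (card {Q. Q \<subseteq> diagonal n \<and> card Q = d}) * real (card (small_weight_sets n c))
           \<le> exp (2 * a) * (4 * real n * (1 + ln (real n)) / a\<^sup>2) powr (a / 2)"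
proof -
  define \<gamma> where "\<gamma> = 4 * real n * (1 + ln (real n)) / a\<^sup>2"
  have "real n \<le> 4 * real n * (1 + ln (real n))" using n by (simp add: mult_le_cancel_left1)
  hence "(sqrt (real n) / a)\<^sup>2 \<le> \<gamma>"
    unfolding \<gamma>_def using a by (simp add: power_divide divide_right_mono)
  hence \<beta>: "sqrt (real n) / a \<le> sqrt \<gamma>" by (rule real_le_rsqrt)
  have "real n * (1 + ln (real n)) / (a / 2)\<^sup>2 = \<gamma>" by (simp add: \<gamma>_def power2_eq_square)
  hence "real (card (small_weight_sets n c)) \<le> exp a * \<gamma> ^ c"
    using card_small_weight_sets_le[OF n, of "a / 2" c] a by simp
  hence "real (card {Q. Q \<subseteq> diagonal n \<and> card Q = d}) * real (card (small_weight_sets n c))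
          \<le> ((sqrt (real n) / a) ^ d * exp a) * (exp a * \<gamma> ^ c)"
    using card_diagonal_subsets_le[OF a] a by (intro mult_mono) auto
  also have "\<dots> = ((sqrt (real n) / a) ^ d * \<gamma> ^ c) * exp (2 * a)"
    by (simp add: mult_exp_exp mult_ac)
  also have "\<dots> \<le> \<gamma> powr (a / 2) * exp (2 * a)"
    using \<beta> dc g a by (intro mult_right_mono power_mult_power_le_powr) (auto simp: \<gamma>_def)
  finally show ?thesis by (simp add: \<gamma>_def mult.commute)
qed

lemma wilf_fixed_count_le:
  assumes n: "n \<ge> 1" and a: "a = (6 * real n) powr (1/3)"
    and g: "1 \<le> 4 * real n * (1 + ln (real n)) / a\<^sup>2"
  shows "real (wilf_fixed_count n)
           \<le> (a + 1)\<^sup>2 * (exp (2 * a) * (4 * real n * (1 + ln (real n)) / a\<^sup>2) powr (a / 2))"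
proof -
  define M where "M = exp (2 * a) * (4 * real n * (1 + ln (real n)) / a\<^sup>2) powr (a / 2)"
  define K where "K = nat \<lfloor>a\<rfloor>"
  define I where "I = {i \<in> {..K} \<times> {..K}. fst i + 2 * snd i \<le> K}"
  have apos: "a > 0" using n a by simp
  have KA: "real K \<le> a" unfolding K_def using apos by (simp add: of_nat_nat)
  have "\<And>P. wilf_partition n P \<Longrightarrow> card P \<le> K"
    using card_wilf_partition_le a by (simp add: K_def le_nat_floor)
  hence "wilf_fixed_count n \<le> (\<Sum>i\<in>I. card {Q. Q \<subseteq> diagonal n \<and> card Q = fst i}
                                    * card (small_weight_sets n (snd i)))"
    unfolding I_def by (rule wilf_fixed_count_le_sum)
  hence "real (wilf_fixed_count n) \<le> (\<Sum>i\<in>I. real (card {Q. Q \<subseteq> diagonal n \<and> card Q = fst i})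
                                             * real (card (small_weight_sets n (snd i))))"
    by (metis (no_types, lifting) of_nat_le_iff of_nat_mult of_nat_sum sum.cong)
  also have "\<dots> \<le> (\<Sum>i\<in>I. M)"
  proof (rule sum_mono)
    fix i assume "i \<in> I"
    hence "real (fst i + 2 * snd i) \<le> a" using KA by (simp add: I_def)
    thus "real (card {Q. Q \<subseteq> diagonal n \<and> card Q = fst i})
            * real (card (small_weight_sets n (snd i))) \<le> M"
      unfolding M_def using n apos g by (intro card_diagonal_subsets_mult_card_small_weight_sets_le)
  qed
  also have "\<dots> \<le> (a + 1)\<^sup>2 * M"
  proof -
    have "card I \<le> card ({..K} \<times> {..K})" by (rule card_mono) (auto simp: I_def)
    hence "real (card I) \<le> (real K + 1)\<^sup>2" by (simp add: power2_eq_square algebra_simps flip: of_nat_mult)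
    also have "\<dots> \<le> (a + 1)\<^sup>2" using KA by (intro power_mono) auto
    finally show ?thesis by (simp add: M_def mult_right_mono)
  qed
  finally show ?thesis by (simp add: M_def)
qed


section \<open>Lower bounds\<close>

lemma image_fst_iota: "fst ` iota P = snd ` P"
  and image_snd_iota: "snd ` iota P = fst ` P"
  by (force simp: iota_eq_image_swap)+

lemma iota_Un_iota: "iota (P \<union> iota P) = P \<union> iota P"
  by (auto simp: iota_eq_image_swap image_image)

lemma wilf_partition_insert:
  assumes W: "wilf_partition m P" and "1 \<le> p" "1 \<le> k" "p \<notin> fst ` P" "k \<notin> snd ` P"
  shows "wilf_partition (m + p * k) (insert (p, k) P)"
proof -
  have fin: "finite P" and w: "weight P = m" using W by (auto simp: wilf_partition_iff)
  have notin: "(p, k) \<notin> P" using assms(4) by force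
  have "weight (insert (p, k) P) = m + p * k"
    using fin notin w by (simp add: weight_def)
  thus ?thesis using W assms notin by (auto simp: wilf_partition_iff)
qed

lemma wilf_partition_Un_iota:
  assumes W: "wilf_partition m P" and disj: "fst ` P \<inter> snd ` P = {}"
  shows "wilf_partition (2 * m) (P \<union> iota P)"
proof -
  have fin: "finite P" and pos: "\<forall>x\<in>P. 1 \<le> fst x \<and> 1 \<le> snd x"
    and i1: "inj_on fst P" and i2: "inj_on snd P" and w: "weight P = m"
    using W by (auto simp: wilf_partition_iff)
  have swap_inj: "inj_on fst (iota P)" "inj_on snd (iota P)"
    using comp_inj_on_iff[OF inj_swap, where A = P and f' = fst]
      comp_inj_on_iff[OF inj_swap, where A = P and f' = snd] i1 i2
    by (simp_all add: iota_eq_image_swap comp_def)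
  have PI: "P \<inter> iota P = {}"
    using disj by (force simp: iota_eq_image_swap)
  have "P - iota P = P" "iota P - P = iota P" using PI by auto
  hence "inj_on fst (P \<union> iota P)" "inj_on snd (P \<union> iota P)"
    using i1 i2 swap_inj disj by (auto simp: inj_on_Un image_fst_iota image_snd_iota)
  moreover have "weight (P \<union> iota P) = 2 * m"
    using fin PI w weight_image_swap[of P]
    by (simp add: weight_def sum.union_disjoint iota_eq_image_swap)
  moreover have "\<forall>x\<in>P \<union> iota P. 1 \<le> fst x \<and> 1 \<le> snd x"
    using pos by (auto simp: iota_eq_image_swap)
  ultimately show ?thesis using fin by (simp add: wilf_partition_iff iota_eq_image_swap)
qed

text \<open>The building block of both lower bounds: block \<open>t < q\<close> matches the \<open>b\<close> consecutive
  parts \<open>c1 + t * b + i\<close> bijectively, via the permutation \<open>\<pi> t\<close>, with the \<open>b\<close> consecutive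
  multiplicities \<open>c2 + (q - 1 - t) * b + \<pi> t i\<close>. Parts increase from block to block while
  multiplicities decrease, which keeps the weight below about \<open>(q * b)\<^sup>3 / 6\<close>; all \<open>fact b ^ q\<close>
  choices of \<open>\<pi>\<close> give distinct sets.\<close>

definition block_perms :: "nat \<Rightarrow> nat \<Rightarrow> (nat \<Rightarrow> nat \<Rightarrow> nat) set" where
  "block_perms b q = (\<Pi>\<^sub>E t\<in>{..<q}. {\<pi>. \<pi> permutes {..<b}})"

definition block_partition ::
    "nat \<Rightarrow> nat \<Rightarrow> nat \<Rightarrow> nat \<Rightarrow> (nat \<Rightarrow> nat \<Rightarrow> nat) \<Rightarrow> (nat \<times> nat) set" where
  "block_partition b q c1 c2 \<pi> =
     (\<lambda>(t, i). (c1 + t * b + i, c2 + (q - 1 - t) * b + \<pi> t i)) ` ({..<q} \<times> {..<b})"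

lemma card_block_perms: "card (block_perms b q) = fact b ^ q"
  unfolding block_perms_def by (simp add: card_PiE card_permutations)

lemma block_perm_less: "\<pi> \<in> block_perms b q \<Longrightarrow> t < q \<Longrightarrow> i < b \<Longrightarrow> \<pi> t i < b"
  unfolding block_perms_def by (auto dest!: permutes_in_image[of _ "{..<b}"])

lemma block_perm_inj: "\<pi> \<in> block_perms b q \<Longrightarrow> t < q \<Longrightarrow> \<pi> t i = \<pi> t i' \<Longrightarrow> i = i'"
  unfolding block_perms_def by (auto dest: permutes_inj injD)

lemma mult_add_less_inject:
  fixes b t t' i i' :: nat
  assumes "i < b" "i' < b" "t * b + i = t' * b + i'" shows "t = t'" "i = i'"
proof -
  have "(t * b + i) div b = t" "(t * b + i) mod b = i"
    "(t' * b + i') div b = t'" "(t' * b + i') mod b = i'" using assms(1,2) by auto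
  thus "t = t'" "i = i'" using assms(3) by metis+
qed

lemma block_partition_mem:
  "x \<in> block_partition b q c1 c2 \<pi> \<longleftrightarrow>
     (\<exists>t<q. \<exists>i<b. x = (c1 + t * b + i, c2 + (q - 1 - t) * b + \<pi> t i))"
  unfolding block_partition_def by auto

lemma finite_block_partition: "finite (block_partition b q c1 c2 \<pi>)"
  by (simp add: block_partition_def)

lemma block_partition_bounds:
  assumes \<pi>: "\<pi> \<in> block_perms b q" and x: "x \<in> block_partition b q c1 c2 \<pi>"
  shows "c1 \<le> fst x" "fst x < c1 + q * b" "c2 \<le> snd x" "snd x < c2 + q * b"
proof -
  obtain t i where t: "t < q" and i: "i < b"
    and xe: "x = (c1 + t * b + i, c2 + (q - 1 - t) * b + \<pi> t i)"
    using x by (auto simp: block_partition_mem)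
  have "t * b + i < Suc t * b" using i by simp
  also have "Suc t * b \<le> q * b" using t by (intro mult_right_mono) auto
  finally show "c1 \<le> fst x" "fst x < c1 + q * b" using xe by auto
  have "(q - 1 - t) * b + \<pi> t i < Suc (q - 1 - t) * b" using block_perm_less[OF \<pi> t i] by simp
  also have "Suc (q - 1 - t) * b \<le> q * b" using t by (intro mult_right_mono) auto
  finally show "c2 \<le> snd x" "snd x < c2 + q * b" using xe by auto
qed

lemma inj_on_fst_block_partition: "inj_on fst (block_partition b q c1 c2 \<pi>)"
proof (rule inj_onI)
  fix x y assume x: "x \<in> block_partition b q c1 c2 \<pi>" and y: "y \<in> block_partition b q c1 c2 \<pi>"
    and e: "fst x = fst y"
  obtain t i where t: "t < q" "i < b" "x = (c1 + t * b + i, c2 + (q - 1 - t) * b + \<pi> t i)"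
    using x by (auto simp: block_partition_mem)
  obtain t' i' where t': "t' < q" "i' < b" "y = (c1 + t' * b + i', c2 + (q - 1 - t') * b + \<pi> t' i')"
    using y by (auto simp: block_partition_mem)
  have "t * b + i = t' * b + i'" using e t t' by simp
  hence "t = t'" "i = i'" using mult_add_less_inject t t' by blast+
  thus "x = y" using t t' by simp
qed

lemma inj_on_snd_block_partition:
  assumes \<pi>: "\<pi> \<in> block_perms b q" shows "inj_on snd (block_partition b q c1 c2 \<pi>)"
proof (rule inj_onI)
  fix x y assume x: "x \<in> block_partition b q c1 c2 \<pi>" and y: "y \<in> block_partition b q c1 c2 \<pi>"
    and e: "snd x = snd y"
  obtain t i where t: "t < q" "i < b" "x = (c1 + t * b + i, c2 + (q - 1 - t) * b + \<pi> t i)"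
    using x by (auto simp: block_partition_mem)
  obtain t' i' where t': "t' < q" "i' < b" "y = (c1 + t' * b + i', c2 + (q - 1 - t') * b + \<pi> t' i')"
    using y by (auto simp: block_partition_mem)
  have eq: "(q - 1 - t) * b + \<pi> t i = (q - 1 - t') * b + \<pi> t' i'" using e t t' by simp
  have "\<pi> t i < b" "\<pi> t' i' < b" using block_perm_less[OF \<pi>] t t' by auto
  hence "q - 1 - t = q - 1 - t'" "\<pi> t i = \<pi> t' i'" using mult_add_less_inject eq by blast+
  moreover from this have tt: "t = t'" using t t' by simp
  ultimately have "i = i'" using block_perm_inj[OF \<pi>] t by blast
  thus "x = y" using t t' tt by simp
qed

lemma inj_on_block_partition: "inj_on (block_partition b q c1 c2) (block_perms b q)"
proof (rule inj_onI)
  fix \<pi> \<pi>' assume \<pi>: "\<pi> \<in> block_perms b q" and \<pi>': "\<pi>' \<in> block_perms b q"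
    and e: "block_partition b q c1 c2 \<pi> = block_partition b q c1 c2 \<pi>'"
  have "\<pi> t i = \<pi>' t i" for t i
  proof (cases "t < q \<and> i < b")
    case True
    hence "(c1 + t * b + i, c2 + (q - 1 - t) * b + \<pi> t i) \<in> block_partition b q c1 c2 \<pi>'"
      unfolding e[symmetric] block_partition_mem by blast
    then obtain t' i' where t': "t' < q" "i' < b"
      "(c1 + t * b + i, c2 + (q - 1 - t) * b + \<pi> t i) = (c1 + t' * b + i', c2 + (q - 1 - t') * b + \<pi>' t' i')"
      by (auto simp: block_partition_mem)
    hence "t * b + i = t' * b + i'" by simp
    hence "t = t'" "i = i'" using mult_add_less_inject True t' by blast+
    thus ?thesis using t' by simp
  next
    case False
    show ?thesis
    proof (cases "t < q")
      case True
      hence "\<pi> t permutes {..<b}" "\<pi>' t permutes {..<b}" using \<pi> \<pi>' by (auto simp: block_perms_def)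
      thus ?thesis using False True by (auto dest!: permutes_not_in)
    qed (use \<pi> \<pi>' in \<open>auto simp: block_perms_def PiE_def extensional_def\<close>)
  qed
  thus "\<pi> = \<pi>'" by blast
qed

lemma wilf_partition_block_partition:
  assumes "\<pi> \<in> block_perms b q" "1 \<le> c1" "1 \<le> c2"
  shows "wilf_partition (weight (block_partition b q c1 c2 \<pi>)) (block_partition b q c1 c2 \<pi>)"
proof -
  have "1 \<le> fst x \<and> 1 \<le> snd x" if "x \<in> block_partition b q c1 c2 \<pi>" for x
    using assms block_partition_bounds[OF assms(1) that] by linarith
  thus ?thesis using assms
    by (simp add: wilf_partition_iff finite_block_partition inj_on_fst_block_partition
        inj_on_snd_block_partition)
qed

lemma six_sum_block_products:
  "6 * (\<Sum>t<q. (t + 2) * (q + 1 + s - t)) = q ^ 3 + 9 * q ^ 2 + 14 * q + 3 * s * q * (q + 3 :: nat)"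
proof (induction q arbitrary: s)
  case (Suc q)
  have "(\<Sum>t<Suc q. (t + 2) * (Suc q + 1 + s - t))
      = (\<Sum>t<q. (t + 2) * (q + 1 + Suc s - t)) + (q + 2) * (s + 2)"
    by simp
  thus ?case using Suc[of "Suc s"] by (simp add: power2_eq_square power3_eq_cube algebra_simps)
qed simp

lemma block_partition_weight_le:
  assumes \<pi>: "\<pi> \<in> block_perms b q" and c: "c1 \<le> b" "c2 \<le> (s + 1) * b"
  shows "6 * weight (block_partition b q c1 c2 \<pi>)
           \<le> b ^ 3 * (q ^ 3 + 9 * q ^ 2 + 14 * q + 3 * s * q * (q + 3))"
proof -
  define f where "f t = (t + 2) * (q + 1 + s - t)" for t
  let ?h = "\<lambda>(t, i). (c1 + t * b + i, c2 + (q - 1 - t) * b + \<pi> t i)"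
  have "weight (block_partition b q c1 c2 \<pi>)
      \<le> sum ((\<lambda>x. fst x * snd x) \<circ> ?h) ({..<q} \<times> {..<b})"
    unfolding weight_def block_partition_def by (rule sum_image_le) auto
  also have "\<dots> = (\<Sum>t<q. \<Sum>i<b. fst (?h (t, i)) * snd (?h (t, i)))"
    by (simp add: sum.cartesian_product')
  also have "\<dots> \<le> (\<Sum>t<q. \<Sum>i<b. (b * b) * f t)"
  proof (intro sum_mono)
    fix t i assume "t \<in> {..<q}" "i \<in> {..<b}"
    hence t: "t < q" and i: "i < b" by auto
    have "c1 + t * b + i \<le> (t + 2) * b" using c i by simp
    moreover have "c2 + (q - 1 - t) * b + \<pi> t i \<le> (q + 1 + s - t) * b"
    proof -
      have "q + 1 + s - t = (s + 1) + (q - 1 - t) + 1" using t by simp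
      thus ?thesis using c block_perm_less[OF \<pi> t i] by (simp only: add_mult_distrib)
    qed
    ultimately have "(c1 + t * b + i) * (c2 + (q - 1 - t) * b + \<pi> t i)
        \<le> ((t + 2) * b) * ((q + 1 + s - t) * b)"
      by (rule mult_mono) auto
    also have "\<dots> = (b * b) * f t" by (simp only: f_def mult_ac)
    finally show "fst (?h (t, i)) * snd (?h (t, i)) \<le> (b * b) * f t" by simp
  qed
  also have "\<dots> = b ^ 3 * (\<Sum>t<q. f t)"
    by (simp add: sum_distrib_left power3_eq_cube mult_ac)
  finally have "6 * weight (block_partition b q c1 c2 \<pi>) \<le> 6 * (b ^ 3 * (\<Sum>t<q. f t))"
    by simp
  also have "\<dots> = b ^ 3 * (6 * (\<Sum>t<q. f t))" by (simp only: mult_ac)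
  also have "6 * (\<Sum>t<q. f t) = q ^ 3 + 9 * q ^ 2 + 14 * q + 3 * s * q * (q + 3)"
    unfolding f_def by (rule six_sum_block_products)
  finally show ?thesis .
qed


lemma wilf_partition_insert_block_partition:
  assumes \<pi>: "\<pi> \<in> block_perms b q" and c: "2 \<le> c1" "1 \<le> c2" and r: "c2 + q * b \<le> r"
  shows "wilf_partition (weight (block_partition b q c1 c2 \<pi>) + r)
           (insert (1, r) (block_partition b q c1 c2 \<pi>))"
proof -
  have W: "wilf_partition (weight (block_partition b q c1 c2 \<pi>)) (block_partition b q c1 c2 \<pi>)"
    using \<pi> c by (intro wilf_partition_block_partition) auto
  have "1 \<notin> fst ` block_partition b q c1 c2 \<pi>" "r \<notin> snd ` block_partition b q c1 c2 \<pi>"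
    using block_partition_bounds[OF \<pi>, of _ c1 c2] c r by fastforce+
  from wilf_partition_insert[OF W _ _ this] show ?thesis using c r by simp
qed

lemma fact_power_le_card_of_block_extension:
  assumes "finite X" and F: "\<And>\<pi>. \<pi> \<in> block_perms b q \<Longrightarrow> F \<pi> \<in> X"
    and recover: "\<And>\<pi>. \<pi> \<in> block_perms b q \<Longrightarrow> block_partition b q c1 c2 \<pi> = {x \<in> F \<pi>. S x}"
  shows "fact b ^ q \<le> card X"
proof -
  have "inj_on F (block_perms b q)"
  proof (rule inj_onI)
    fix \<pi> \<pi>' assume \<pi>: "\<pi> \<in> block_perms b q" "\<pi>' \<in> block_perms b q" and "F \<pi> = F \<pi>'"
    hence "block_partition b q c1 c2 \<pi> = block_partition b q c1 c2 \<pi>'" using recover by simp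
    from inj_on_block_partition this \<pi> show "\<pi> = \<pi>'" by (rule inj_onD)
  qed
  hence "fact b ^ q = card (F ` block_perms b q)" by (simp add: card_image card_block_perms)
  also have "\<dots> \<le> card X" using assms by (intro card_mono) auto
  finally show ?thesis .
qed

lemma weight_block_partition_room:
  assumes \<pi>: "\<pi> \<in> block_perms b q" and b: "b \<ge> 2" and n: "(b * (q + 4)) ^ 3 \<le> 6 * n"
  shows "weight (block_partition b q 2 2 \<pi>) + 2 + q * b \<le> n"
proof -
  define B where "B = b ^ 3"
  have "b \<le> B" using b by (simp add: B_def power3_eq_cube)
  hence qb: "q * b \<le> B * q" and B: "1 \<le> B" using b by auto
  have "6 * weight (block_partition b q 2 2 \<pi>) \<le> B * q ^ 3 + 9 * (B * q ^ 2) + 14 * (B * q)"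
    using block_partition_weight_le[OF \<pi>, of 2 2 0] b by (simp add: B_def algebra_simps)
  moreover have "B * q ^ 3 + 12 * (B * q ^ 2) + 48 * (B * q) + 64 * B \<le> 6 * n"
    using n by (simp add: B_def power_mult_distrib power2_eq_square power3_eq_cube algebra_simps)
  ultimately show ?thesis using qb B by linarith
qed

lemma weight_block_partition_room_fixed:
  assumes \<pi>: "\<pi> \<in> block_perms b q" and b: "b \<ge> 4" and n: "(b * (2 * (q + 3))) ^ 3 \<le> 6 * n"
  shows "2 * weight (block_partition b q 4 (4 + q * b) \<pi>) + 17 + 4 * (q * b) \<le> n"
proof -
  define B where "B = b ^ 3"
  have "b \<le> B" using b by (simp add: B_def power3_eq_cube)
  hence qb: "q * b \<le> B * q" and B: "1 \<le> B" using b by auto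
  have "4 + q * b \<le> (q + 1) * b" using b by simp
  hence "6 * weight (block_partition b q 4 (4 + q * b) \<pi>)
           \<le> 4 * (B * q ^ 3) + 18 * (B * q ^ 2) + 14 * (B * q)"
    using block_partition_weight_le[OF \<pi>, of 4 "4 + q * b" q] b
    by (simp add: B_def power2_eq_square power3_eq_cube algebra_simps)
  moreover have "8 * (B * q ^ 3) + 72 * (B * q ^ 2) + 216 * (B * q) + 216 * B \<le> 6 * n"
    using n by (simp add: B_def power_mult_distrib power2_eq_square power3_eq_cube algebra_simps)
  ultimately show ?thesis using qb B by linarith
qed

lemma wilf_count_ge:
  assumes b: "b \<ge> 2" and n: "(b * (q + 4)) ^ 3 \<le> 6 * n"
  shows "fact b ^ q \<le> wilf_count n"
proof -
  define G where "G \<pi> = block_partition b q 2 2 \<pi>" for \<pi>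
  define P where "P \<pi> = insert (1, n - weight (G \<pi>)) (G \<pi>)" for \<pi>
  have "P \<pi> \<in> wilf_partitions n" if \<pi>: "\<pi> \<in> block_perms b q" for \<pi>
  proof -
    note room = weight_block_partition_room[OF \<pi> b n]
    have "wilf_partition (weight (G \<pi>) + (n - weight (G \<pi>))) (P \<pi>)"
      unfolding P_def G_def using room by (intro wilf_partition_insert_block_partition[OF \<pi>]) auto
    moreover have "weight (G \<pi>) + (n - weight (G \<pi>)) = n" using room by (simp add: G_def)
    ultimately show ?thesis by (simp add: wilf_partitions_def)
  qed
  moreover have "block_partition b q 2 2 \<pi> = {x \<in> P \<pi>. fst x \<noteq> 1}" if "\<pi> \<in> block_perms b q" for \<pi>
    using block_partition_bounds[OF that, of _ 2 2] by (fastforce simp: P_def G_def)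
  ultimately show ?thesis
    unfolding wilf_count_def by (rule fact_power_le_card_of_block_extension[OF finite_wilf_partitions])
qed

lemma mem_iota_iff: "(p, m) \<in> iota P \<longleftrightarrow> (m, p) \<in> P"
  by (auto simp: iota_eq_image_swap)

lemma iota_insert_diag: "iota (insert (k, k) P) = insert (k, k) (iota P)"
  by (simp add: iota_eq_image_swap)

lemma wilf_partition_insert_Un_iota:
  assumes "wilf_partition m P" "fst ` P \<inter> snd ` P = {}" "1 \<le> k" "k \<notin> fst ` P" "k \<notin> snd ` P"
  shows "wilf_partition (2 * m + k * k) (insert (k, k) (P \<union> iota P))"
proof -
  have "k \<notin> fst ` (P \<union> iota P)" "k \<notin> snd ` (P \<union> iota P)"
    using assms by (simp_all add: image_Un image_fst_iota image_snd_iota)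
  with assms show ?thesis by (intro wilf_partition_insert wilf_partition_Un_iota) auto
qed

text \<open>Here \<open>A\<close> is a Wilf partition of \<open>h = \<lfloor>n/2\<rfloor>\<close> (of \<open>h = (n - 9)/2\<close> for odd \<open>n\<close>)
  whose parts and multiplicities are disjoint, so that \<open>A \<union> iota A\<close>, together with the
  pair \<open>(3, 3)\<close> for odd \<open>n\<close>, is a fixed point.\<close>

lemma wilf_fixed_count_ge:
  assumes b: "b \<ge> 4" and n: "(b * (2 * (q + 3))) ^ 3 \<le> 6 * n"
  shows "fact b ^ q \<le> wilf_fixed_count n"
proof -
  define c where "c = 4 + q * b"
  define h where "h = (if even n then n div 2 else (n - 9) div 2)"
  define G where "G \<pi> = block_partition b q 4 c \<pi>" for \<pi>
  define A where "A \<pi> = insert (1, h - weight (G \<pi>)) (G \<pi>)" for \<pi>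
  define P where
    "P \<pi> = (if even n then A \<pi> \<union> iota (A \<pi>) else insert (3, 3) (A \<pi> \<union> iota (A \<pi>)))" for \<pi>
  have room: "weight (G \<pi>) + c + q * b \<le> h" "n = 2 * h + (if even n then 0 else 9)"
    if \<pi>: "\<pi> \<in> block_perms b q" for \<pi>
  proof -
    have "2 * weight (G \<pi>) + 17 + 4 * (q * b) \<le> n"
      using weight_block_partition_room_fixed[OF \<pi> b n] by (simp add: G_def c_def)
    thus "weight (G \<pi>) + c + q * b \<le> h" "n = 2 * h + (if even n then 0 else 9)"
      unfolding h_def c_def by presburger+
  qed
  have coords: "(fst x = 1 \<or> 4 \<le> fst x \<and> fst x < c) \<and> c \<le> snd x"
    if \<pi>: "\<pi> \<in> block_perms b q" and x: "x \<in> A \<pi>" for \<pi> x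
  proof -
    have "x = (1, h - weight (G \<pi>)) \<or> x \<in> G \<pi>" using x by (simp add: A_def)
    moreover have "c \<le> h - weight (G \<pi>)" using room(1)[OF \<pi>] by simp
    ultimately show ?thesis using block_partition_bounds[OF \<pi>, of x 4 c] by (auto simp: G_def c_def)
  qed
  have "P \<pi> \<in> {P \<in> wilf_partitions n. iota P = P}" if \<pi>: "\<pi> \<in> block_perms b q" for \<pi>
  proof -
    have "wilf_partition (weight (G \<pi>) + (h - weight (G \<pi>))) (A \<pi>)"
      unfolding A_def G_def using room(1)[OF \<pi>, unfolded G_def]
      by (intro wilf_partition_insert_block_partition[OF \<pi>]) (auto simp: c_def)
    hence WA: "wilf_partition h (A \<pi>)" using room(1)[OF \<pi>] by simp
    have "fst ` A \<pi> \<subseteq> {1} \<union> {4..<c}" "snd ` A \<pi> \<subseteq> {c..}" using coords[OF \<pi>] by force+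
    hence disj: "fst ` A \<pi> \<inter> snd ` A \<pi> = {}" and "3 \<notin> fst ` A \<pi>" "3 \<notin> snd ` A \<pi>"
      by (fastforce simp: c_def)+
    hence "wilf_partition n (P \<pi>)"
      using wilf_partition_Un_iota[OF WA disj] wilf_partition_insert_Un_iota[OF WA disj, of 3]
        room(2)[OF \<pi>] by (cases "even n") (simp_all add: P_def)
    moreover have "iota (P \<pi>) = P \<pi>" by (simp add: P_def iota_Un_iota iota_insert_diag)
    ultimately show ?thesis by (simp add: wilf_partitions_def)
  qed
  moreover have "block_partition b q 4 c \<pi> = {x \<in> P \<pi>. 4 \<le> fst x \<and> fst x < c}"
    if \<pi>: "\<pi> \<in> block_perms b q" for \<pi>
  proof (intro equalityI subsetI)
    fix x assume "x \<in> block_partition b q 4 c \<pi>"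
    thus "x \<in> {x \<in> P \<pi>. 4 \<le> fst x \<and> fst x < c}"
      using block_partition_bounds[OF \<pi>, of x 4 c] by (auto simp: P_def A_def G_def c_def)
  next
    fix x assume x: "x \<in> {x \<in> P \<pi>. 4 \<le> fst x \<and> fst x < c}"
    obtain u v where x_eq: "x = (u, v)" by fastforce
    have "(u, v) \<in> A \<pi> \<or> (v, u) \<in> A \<pi> \<or> (u, v) = (3, 3)"
      using x by (auto simp: P_def x_eq mem_iota_iff split: if_splits)
    moreover have "c \<le> u" if "(v, u) \<in> A \<pi>" using coords[OF \<pi> that] by simp
    ultimately show "x \<in> block_partition b q 4 c \<pi>" using x by (auto simp: x_eq A_def G_def)
  qed
  ultimately show ?thesis unfolding wilf_fixed_count_def
    by (rule fact_power_le_card_of_block_extension[rotated]) (use finite_wilf_partitions in auto)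
qed


section \<open>Asymptotics\<close>

definition wilf_scale :: "nat \<Rightarrow> real" where
  "wilf_scale n = (1/6) * (6 * real n) powr (1/3) * ln (real n)"

lemma tendsto_ratio_squeeze:
  fixes g U T :: "nat \<Rightarrow> real" and L :: "nat \<Rightarrow> nat \<Rightarrow> real" and r :: "nat \<Rightarrow> real"
  assumes up: "eventually (\<lambda>n. g n \<le> U n) at_top"
    and U: "((\<lambda>n. U n / T n) \<longlongrightarrow> c) at_top"
    and T: "eventually (\<lambda>n. T n > 0) at_top"
    and low: "\<And>q. q \<ge> 1 \<Longrightarrow> eventually (\<lambda>n. L q n \<le> g n) at_top"
    and L: "\<And>q. q \<ge> 1 \<Longrightarrow> ((\<lambda>n. L q n / T n) \<longlongrightarrow> r q) at_top"
    and r: "(r \<longlongrightarrow> c) at_top"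
  shows "((\<lambda>n. g n / T n) \<longlongrightarrow> c) at_top"
proof (rule tendstoI)
  fix e :: real assume e: "e > 0"
  have "eventually (\<lambda>q. dist (r q) c < e / 2) at_top" using r e by (intro tendstoD) auto
  then obtain N where N: "\<And>q. q \<ge> N \<Longrightarrow> dist (r q) c < e / 2"
    by (auto simp: eventually_at_top_linorder)
  define q where "q = max N 1"
  have q: "q \<ge> 1" by (simp add: q_def)
  have "\<bar>r q - c\<bar> < e / 2" using N[of q] by (simp add: q_def dist_real_def)
  hence rq: "r q > c - e / 2" using abs_ge_minus_self[of "r q - c"] by linarith
  have "eventually (\<lambda>n. dist (L q n / T n) (r q) < e / 2) at_top"
    using L[OF q] e by (intro tendstoD) auto
  moreover have "eventually (\<lambda>n. dist (U n / T n) c < e) at_top" using U e by (intro tendstoD) auto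
  ultimately show "eventually (\<lambda>n. dist (g n / T n) c < e) at_top"
    using up T low[OF q]
  proof eventually_elim
    case (elim n)
    have "L q n / T n \<le> g n / T n" "g n / T n \<le> U n / T n"
      using elim by (auto intro: divide_right_mono)
    moreover have "\<bar>L q n / T n - r q\<bar> < e / 2" "\<bar>U n / T n - c\<bar> < e"
      using elim(1,2) by (simp_all add: dist_real_def)
    ultimately have "- e < g n / T n - c" "g n / T n - c < e"
      using rq abs_ge_minus_self[of "L q n / T n - r q"] abs_ge_self[of "U n / T n - c"] by linarith+
    thus ?case by (simp add: dist_real_def abs_less_iff)
  qed
qed

text \<open>A lower estimate of \<open>q * (b * ln b - b)\<close> for the largest block size
  \<open>b = \<lfloor>(6 * n) powr (1/3) / D\<rfloor>\<close> allowed by the weight bound.\<close>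

definition block_lower_bound :: "nat \<Rightarrow> nat \<Rightarrow> nat \<Rightarrow> real" where
  "block_lower_bound q D n =
     real q * (((6 * real n) powr (1/3) / real D - 1) * ln ((6 * real n) powr (1/3) / real D - 1)
               - (6 * real n) powr (1/3) / real D)"

lemma eventually_block_lower_bound_le:
  fixes C :: "nat \<Rightarrow> nat"
  assumes D: "D \<ge> 1" and b0: "b0 \<ge> 2"
    and C: "\<And>b n. b0 \<le> b \<Longrightarrow> (b * D) ^ 3 \<le> 6 * n \<Longrightarrow> fact b ^ q \<le> C n"
  shows "eventually (\<lambda>n. block_lower_bound q D n \<le> ln (real (C n))) at_top"
proof -
  have "real D > 0" using D by simp
  hence "eventually (\<lambda>n::nat. real b0 + 1 \<le> (6 * real n) powr (1/3) / real D) at_top"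
    by real_asymp
  thus ?thesis
  proof eventually_elim
    case (elim n)
    define x where "x = (6 * real n) powr (1/3) / real D"
    define b where "b = nat \<lfloor>x\<rfloor>"
    have x: "real b0 + 1 \<le> x" using elim by (simp add: x_def)
    have bx: "real b \<le> x" "x - 1 \<le> real b" using x by (auto simp: b_def of_nat_nat)
    hence "b0 \<le> b" using x by (simp flip: of_nat_le_iff)
    have "real ((b * D) ^ 3) = (real b * real D) ^ 3" by simp
    also have "\<dots> \<le> (x * real D) ^ 3" using bx by (intro power_mono mult_right_mono) auto
    also have "x * real D = (6 * real n) powr (1/3)" using D by (simp add: x_def)
    also have "\<dots> ^ 3 = real (6 * n)" by (simp add: powr_one_third_cube)
    finally have "fact b ^ q \<le> C n" using C[OF \<open>b0 \<le> b\<close>] by (simp only: of_nat_le_iff)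
    hence Cn: "(fact b :: real) ^ q \<le> real (C n)" using of_nat_mono by fastforce
    have "(x - 1) * ln (x - 1) \<le> real b * ln (real b)" using bx x b0 by (intro mult_mono ln_mono) auto
    hence "block_lower_bound q D n \<le> real q * (real b * ln (real b) - real b)"
      unfolding block_lower_bound_def x_def[symmetric] using bx by (intro mult_left_mono) auto
    also have "\<dots> \<le> real q * ln (fact b)" by (intro mult_left_mono ln_fact_ge) auto
    also have "\<dots> = ln ((fact b :: real) ^ q)" by (simp add: ln_realpow)
    also have "\<dots> \<le> ln (real (C n))" using Cn by (intro ln_mono) auto
    finally show ?case .
  qed
qed

lemma block_lower_bound_over_scale:
  assumes "q \<ge> 1" "D \<ge> 1"
  shows "((\<lambda>n. block_lower_bound q D n / wilf_scale n) \<longlongrightarrow> 2 * real q / real D) at_top"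
proof -
  have "real q > 0" "real D > 0" using assms by auto
  hence "((\<lambda>n. block_lower_bound q D n / wilf_scale n) \<longlongrightarrow> 2 * (real q * inverse (real D))) at_top"
    unfolding block_lower_bound_def wilf_scale_def by real_asymp
  thus ?thesis by (simp only: divide_inverse mult.assoc)
qed

lemma ln_le_of_le_exp_powr:
  fixes P a B e :: real
  assumes "real C \<le> P * (exp (2 * a) * B powr e)" "1 \<le> P" "0 \<le> a" "1 \<le> B" "0 \<le> e"
  shows "ln (real C) \<le> ln P + 2 * a + e * ln B"
proof -
  have "1 \<le> exp (2 * a)" "1 \<le> B powr e" using assms by (auto intro: ge_one_powr_ge_zero)
  hence "1 * 1 \<le> exp (2 * a) * B powr e" by (intro mult_mono) auto
  hence M: "1 * 1 \<le> P * (exp (2 * a) * B powr e)" using assms(2) by (intro mult_mono) auto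
  have "ln (real C) \<le> ln (P * (exp (2 * a) * B powr e))"
    using assms(1) M by (cases "C = 0") (auto intro: ln_mono)
  also have "\<dots> = ln P + 2 * a + e * ln B" using assms by (simp add: ln_mult ln_powr)
  finally show ?thesis .
qed

lemma eventually_wilf_scale_pos: "eventually (\<lambda>n. wilf_scale n > 0) at_top"
  unfolding wilf_scale_def by real_asymp

lemma ln_wilf_count_over_scale:
  "((\<lambda>n. ln (real (wilf_count n)) / wilf_scale n) \<longlongrightarrow> 2) at_top"
proof -
  define a where "a n = (6 * real n) powr (1/3)" for n :: nat
  define B where "B n = real n * (1 + ln (real n)) / (a n)\<^sup>2" for n
  define U where "U n = ln (a n + 1) + 2 * a n + a n * ln (B n)" for n
  have "eventually (\<lambda>n. 1 \<le> B n) at_top" unfolding B_def a_def by real_asymp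
  hence up: "eventually (\<lambda>n. ln (real (wilf_count n)) \<le> U n) at_top"
    using eventually_ge_at_top[of 1]
  proof eventually_elim
    case (elim n)
    have "real (wilf_count n) \<le> (a n + 1) * (exp (2 * a n) * B n powr a n)"
      using elim by (simp add: wilf_count_le a_def B_def)
    thus ?case unfolding U_def by (rule ln_le_of_le_exp_powr) (use elim in \<open>simp_all add: a_def\<close>)
  qed
  have "((\<lambda>n. U n / wilf_scale n) \<longlongrightarrow> 2) at_top"
    unfolding U_def B_def a_def wilf_scale_def by real_asymp
  moreover have "eventually (\<lambda>n. block_lower_bound q (q + 4) n \<le> ln (real (wilf_count n))) at_top"
    if "q \<ge> 1" for q by (rule eventually_block_lower_bound_le) (auto intro: wilf_count_ge)
  moreover have "((\<lambda>q. 2 * real q / real (q + 4)) \<longlongrightarrow> 2) at_top" by real_asymp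
  ultimately show ?thesis
    by (intro tendsto_ratio_squeeze[where L = "\<lambda>q. block_lower_bound q (q + 4)"
          and r = "\<lambda>q. 2 * real q / real (q + 4)", OF up _ eventually_wilf_scale_pos]
        block_lower_bound_over_scale) auto
qed

lemma ln_wilf_fixed_count_over_scale:
  "((\<lambda>n. ln (real (wilf_fixed_count n)) / wilf_scale n) \<longlongrightarrow> 1) at_top"
proof -
  define a where "a n = (6 * real n) powr (1/3)" for n :: nat
  define B where "B n = 4 * real n * (1 + ln (real n)) / (a n)\<^sup>2" for n
  define U where "U n = ln ((a n + 1)\<^sup>2) + 2 * a n + a n / 2 * ln (B n)" for n
  have "eventually (\<lambda>n. 1 \<le> B n) at_top" unfolding B_def a_def by real_asymp
  hence up: "eventually (\<lambda>n. ln (real (wilf_fixed_count n)) \<le> U n) at_top"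
    using eventually_ge_at_top[of 1]
  proof eventually_elim
    case (elim n)
    have "real (wilf_fixed_count n) \<le> (a n + 1)\<^sup>2 * (exp (2 * a n) * B n powr (a n / 2))"
      using elim by (simp add: wilf_fixed_count_le a_def B_def)
    thus ?case unfolding U_def by (rule ln_le_of_le_exp_powr) (use elim in \<open>simp_all add: a_def\<close>)
  qed
  have "((\<lambda>n. U n / wilf_scale n) \<longlongrightarrow> 1) at_top"
    unfolding U_def B_def a_def wilf_scale_def by real_asymp
  moreover have "eventually (\<lambda>n. block_lower_bound q (2 * (q + 3)) n
                                \<le> ln (real (wilf_fixed_count n))) at_top" if "q \<ge> 1" for q
    using wilf_fixed_count_ge by (intro eventually_block_lower_bound_le[of _ 4]) auto
  moreover have "((\<lambda>q. 2 * real q / real (2 * (q + 3))) \<longlongrightarrow> 1) at_top" by real_asymp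
  ultimately show ?thesis
    by (intro tendsto_ratio_squeeze[where L = "\<lambda>q. block_lower_bound q (2 * (q + 3))"
          and r = "\<lambda>q. 2 * real q / real (2 * (q + 3))", OF up _ eventually_wilf_scale_pos]
        block_lower_bound_over_scale) auto
qed

theorem theorem1:
  shows "(\<lambda>n. ln (real (wilf_fixed_count n))) \<sim>[at_top] (\<lambda>n. ln (real (wilf_count n)) / 2)
     \<and> (\<lambda>n. ln (real (wilf_count n)) / 2) \<sim>[at_top]
         (\<lambda>n::nat. (1/6) * (6 * real n) powr (1/3) * ln (real n))"
proof -
  have "((\<lambda>n. ln (real (wilf_count n)) / wilf_scale n / 2) \<longlongrightarrow> 2 / 2) at_top"
    by (intro tendsto_divide ln_wilf_count_over_scale) auto
  hence half: "(\<lambda>n. ln (real (wilf_count n)) / 2) \<sim>[at_top] wilf_scale"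
    by (intro asymp_equivI') (simp add: divide_divide_eq_left mult.commute)
  have fixed: "(\<lambda>n. ln (real (wilf_fixed_count n))) \<sim>[at_top] wilf_scale"
    by (rule asymp_equivI'[OF ln_wilf_fixed_count_over_scale])
  show ?thesis
    using asymp_equiv_trans[OF fixed asymp_equiv_symI[OF half]] half
    by (simp add: wilf_scale_def[abs_def])
qed

end
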